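(* Let $n\ge 1$, $d=2^n$, and let $\Lambda$ be a CPTP Pauli channel on $n$ qubits, with Pauli fidelities $f_a$ (indexed by the $d^2$ Pauli operators $a$), so that $\Lambda$ as a superoperator is diagonal in the Pauli basis with eigenvalues $f_a$. Let $F_p=\operatorname{Tr}(\Lambda)/d^2=\frac{1}{d^2}\sum_a f_a$ be its process fidelity, assume $\tfrac12<F_p<1$, and let $\gamma=\det(\Lambda)^{-2/d^2}$. Then $$F_p-1+2\lambda_0(1-F_p)+(2F_p-1)^{\lambda_0}\;\le\;\gamma^{-1/2}\;\le\;F_p,$$ where $$\lambda_0=\frac{\log(2-2F_p)-\log\bigl(-\log(2F_p-1)\bigr)}{\log(2F_p-1)}.$$ *)

theory Defs
  imports Complex_Main
begin

text \<open>n-qubit Pauli operators (up to phase) are indexed by pairs (x, z) of subsets of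
  the qubit set {0..<n}: the X-support and the Z-support. There are 4^n = d^2 of them.\<close>
definition paulis :: "nat \<Rightarrow> (nat set \<times> nat set) set" where
  "paulis n = Pow {..<n} \<times> Pow {..<n}"

text \<open>Commutation sign: P_b P_a P_b = pauli_sign a b * P_a (symplectic form).\<close>
definition pauli_sign :: "nat set \<times> nat set \<Rightarrow> nat set \<times> nat set \<Rightarrow> real" where
  "pauli_sign a b = (-1) ^ (card (fst a \<inter> snd b) + card (snd a \<inter> fst b))"

text \<open>A Pauli channel Lambda(rho) = sum_b p_b P_b rho P_b with error rates p.
  It is CPTP iff p is a probability distribution on the Paulis.\<close>
definition cptp_pauli_channel :: "nat \<Rightarrow> (nat set \<times> nat set \<Rightarrow> real) \<Rightarrow> bool" where
  "cptp_pauli_channel n p \<longleftrightarrow> (\<forall>b\<in>paulis n. 0 \<le> p b) \<and> (\<Sum>b\<in>paulis n. p b) = 1"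

text \<open>Pauli fidelities: Lambda(P_a) = f_a P_a, i.e. the eigenvalues of the superoperator.\<close>
definition pauli_fidelity :: "nat \<Rightarrow> (nat set \<times> nat set \<Rightarrow> real) \<Rightarrow> nat set \<times> nat set \<Rightarrow> real" where
  "pauli_fidelity n p a = (\<Sum>b\<in>paulis n. p b * pauli_sign a b)"

end

theory Submission
  imports Defs "HOL-Analysis.Analysis"
begin

text \<open>Each Pauli fidelity is an average of signs \<open>\<plusminus>1\<close> against the error distribution \<open>p\<close>,
  so \<open>2 p\<^sub>0 - 1 \<le> f a \<le> 1\<close>, and character orthogonality gives \<open>\<Sum>\<^sub>a f a = d\<^sup>2 p\<^sub>0\<close>: the process
  fidelity \<open>F\<^sub>p = p\<^sub>0\<close> is the arithmetic mean of the fidelities and \<open>\<gamma> powr (-1/2)\<close> their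
  geometric mean. The upper bound is AM-GM. For the lower bound, concavity of \<open>ln\<close> on \<open>[c, 1]\<close>
  with \<open>c = 2 F\<^sub>p - 1\<close> puts every \<open>ln (f a)\<close> above the chord from \<open>(c, ln c)\<close> to \<open>(1, 0)\<close>;
  averaging gives \<open>\<gamma> powr (-1/2) \<ge> c powr (1/2)\<close>, and \<open>c powr (1/2)\<close> lies above the tangent of
  the convex function \<open>\<lambda> \<mapsto> c powr \<lambda>\<close> at \<open>\<lambda>\<^sub>0\<close>.\<close>

lemma sum_Pow_neg_one_power_card_Int:
  fixes S T :: "'a set"
  assumes "finite S" and "T \<subseteq> S"
  shows "(\<Sum>x\<in>Pow S. (-1::real) ^ card (x \<inter> T)) = (if T = {} then 2 ^ card S else 0)"
proof (cases "T = {}")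
  case True
  then show ?thesis using assms(1) by (simp add: card_Pow)
next
  case False
  then obtain t where "t \<in> T" by blast
  define toggle where "toggle x = (if t \<in> x then x - {t} else insert t x)" for x :: "'a set"
  have "bij_betw toggle (Pow S) (Pow S)"
    by (rule bij_betw_byWitness[where f' = toggle])
      (use \<open>t \<in> T\<close> assms(2) in \<open>auto simp: toggle_def\<close>)
  have toggle_sign: "(-1::real) ^ card (toggle x \<inter> T) = - ((-1) ^ card (x \<inter> T))" if "x \<in> Pow S" for x
  proof -
    have "finite x" using that assms(1) finite_subset by blast
    show ?thesis
    proof (cases "t \<in> x")
      case True
      then have "toggle x = x - {t}" by (simp add: toggle_def)
      moreover have "x \<inter> T = insert t ((x - {t}) \<inter> T)" using True \<open>t \<in> T\<close> by blast
      ultimately show ?thesis using \<open>finite x\<close> by simp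
    next
      case False
      then have "toggle x \<inter> T = insert t (x \<inter> T)" using \<open>t \<in> T\<close> by (simp add: toggle_def)
      then show ?thesis using \<open>finite x\<close> False by simp
    qed
  qed
  have "(\<Sum>x\<in>Pow S. (-1::real) ^ card (x \<inter> T)) = (\<Sum>x\<in>Pow S. (-1) ^ card (toggle x \<inter> T))"
    using sum.reindex_bij_betw[OF \<open>bij_betw toggle (Pow S) (Pow S)\<close>,
        of "\<lambda>x. (-1::real) ^ card (x \<inter> T)"] by simp
  also have "\<dots> = - (\<Sum>x\<in>Pow S. (-1::real) ^ card (x \<inter> T))"
    by (simp add: toggle_sign sum_negf)
  finally show ?thesis using False by simp
qed

lemma finite_paulis [simp]: "finite (paulis n)"
  by (simp add: paulis_def)

lemma card_paulis: "card (paulis n) = 4 ^ n"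
  by (simp add: paulis_def card_cartesian_product card_Pow power_mult_distrib [symmetric])

lemma identity_in_paulis [simp]: "({}, {}) \<in> paulis n"
  by (simp add: paulis_def)

lemma abs_pauli_sign [simp]: "\<bar>pauli_sign a b\<bar> = 1"
  by (simp add: pauli_sign_def)

lemma pauli_sign_identity [simp]: "pauli_sign a ({}, {}) = 1"
  by (simp add: pauli_sign_def)

lemma sum_pauli_sign:
  assumes "b \<in> paulis n"
  shows "(\<Sum>a\<in>paulis n. pauli_sign a b) = (if b = ({}, {}) then 4 ^ n else 0)"
proof -
  obtain bx bz where b: "b = (bx, bz)" "bx \<subseteq> {..<n}" "bz \<subseteq> {..<n}"
    using assms by (auto simp: paulis_def)
  have "(\<Sum>a\<in>paulis n. pauli_sign a b)
      = (\<Sum>(x, z)\<in>Pow {..<n} \<times> Pow {..<n}. (-1::real) ^ card (x \<inter> bz) * (-1) ^ card (z \<inter> bx))"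
    by (rule sum.cong) (auto simp: paulis_def pauli_sign_def b power_add)
  also have "\<dots> = (\<Sum>x\<in>Pow {..<n}. (-1::real) ^ card (x \<inter> bz)) * (\<Sum>z\<in>Pow {..<n}. (-1) ^ card (z \<inter> bx))"
    by (simp add: sum_product sum.cartesian_product)
  also have "\<dots> = (if b = ({}, {}) then 4 ^ n else 0)"
    using b by (simp add: sum_Pow_neg_one_power_card_Int power_mult_distrib [symmetric])
  finally show ?thesis .
qed

lemma sum_pauli_fidelity: "(\<Sum>a\<in>paulis n. pauli_fidelity n p a) = 4 ^ n * p ({}, {})"
proof -
  have "(\<Sum>a\<in>paulis n. pauli_fidelity n p a) = (\<Sum>b\<in>paulis n. p b * (\<Sum>a\<in>paulis n. pauli_sign a b))"
    unfolding pauli_fidelity_def by (subst sum.swap) (simp add: sum_distrib_left)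
  also have "\<dots> = (\<Sum>b\<in>paulis n. if b = ({}, {}) then 4 ^ n * p b else 0)"
    by (rule sum.cong) (simp_all add: sum_pauli_sign)
  finally show ?thesis by simp
qed

lemma pauli_fidelity_le_one:
  assumes "cptp_pauli_channel n p"
  shows "pauli_fidelity n p a \<le> 1"
proof -
  have "pauli_fidelity n p a \<le> (\<Sum>b\<in>paulis n. p b)"
    unfolding pauli_fidelity_def
  proof (rule sum_mono)
    fix b assume "b \<in> paulis n"
    then have "\<bar>p b * pauli_sign a b\<bar> = p b"
      using assms by (simp add: cptp_pauli_channel_def abs_mult)
    then show "p b * pauli_sign a b \<le> p b" by linarith
  qed
  then show ?thesis using assms by (simp add: cptp_pauli_channel_def)
qed

lemma pauli_fidelity_ge:
  assumes "cptp_pauli_channel n p"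
  shows "2 * p ({}, {}) - 1 \<le> pauli_fidelity n p a"
proof -
  let ?E = "paulis n - {({}, {})}"
  have "(\<Sum>b\<in>?E. - p b) \<le> (\<Sum>b\<in>?E. p b * pauli_sign a b)"
  proof (rule sum_mono)
    fix b assume "b \<in> ?E"
    then have "\<bar>p b * pauli_sign a b\<bar> = p b"
      using assms by (simp add: cptp_pauli_channel_def abs_mult)
    then show "- p b \<le> p b * pauli_sign a b" by linarith
  qed
  moreover have "(\<Sum>b\<in>?E. p b) = 1 - p ({}, {})"
    using assms by (simp add: cptp_pauli_channel_def sum_diff1)
  ultimately show ?thesis
    by (simp add: pauli_fidelity_def sum.remove [of _ "({}, {})"] sum_negf)
qed

lemma prod_powr_eq_exp_sum_ln:
  fixes g :: "'a \<Rightarrow> real"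
  assumes "finite A" and "\<And>a. a \<in> A \<Longrightarrow> 0 < g a"
  shows "(\<Prod>a\<in>A. g a) powr r = exp (r * (\<Sum>a\<in>A. ln (g a)))"
  using assms by (simp add: powr_def prod_pos ln_prod less_imp_neq [symmetric])

lemma exp_mean_ln_le_mean:
  fixes g :: "'a \<Rightarrow> real"
  assumes "finite A" and "A \<noteq> {}" and "\<And>a. a \<in> A \<Longrightarrow> 0 < g a"
  shows "exp ((\<Sum>a\<in>A. ln (g a)) / card A) \<le> (\<Sum>a\<in>A. g a) / card A"
proof -
  have "(\<Sum>a\<in>A. 1 / card A * ln (g a)) \<le> ln (\<Sum>a\<in>A. (1 / card A) *\<^sub>R g a)"
    using assms by (intro concave_on_sum [where a = "\<lambda>_. 1 / card A" and y = g, OF _ _ ln_concave]) auto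
  moreover have "0 < (\<Sum>a\<in>A. g a)"
    using assms by (intro sum_pos) auto
  ultimately have "(\<Sum>a\<in>A. ln (g a)) / card A \<le> ln ((\<Sum>a\<in>A. g a) / card A)"
    by (simp add: sum_divide_distrib [symmetric] sum_distrib_left [symmetric])
  then show ?thesis
    using \<open>0 < (\<Sum>a\<in>A. g a)\<close> assms(1,2) by (simp add: ln_ge_iff card_gt_0_iff)
qed

lemma ln_ge_chord:
  fixes c x :: real
  assumes "0 < c" and "c \<le> x" and "x \<le> 1"
  shows "(1 - x) / (1 - c) * ln c \<le> ln x"
proof -
  have "concave_on {c..1} ln"
    using assms(1) unfolding concave_on_def
    by (intro convex_on_subset [OF ln_concave [unfolded concave_on_def]]) auto
  from concave_onD_Icc'' [OF this, of x] show ?thesis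
    using assms by (simp add: mult.commute)
qed

lemma exp_mean_ln_ge:
  fixes g :: "'a \<Rightarrow> real" and c m :: real
  assumes "finite A" and "A \<noteq> {}" and "0 < c"
    and "\<And>a. a \<in> A \<Longrightarrow> c \<le> g a \<and> g a \<le> 1"
    and "(\<Sum>a\<in>A. g a) = card A * m"
  shows "c powr ((1 - m) / (1 - c)) \<le> exp ((\<Sum>a\<in>A. ln (g a)) / card A)"
proof -
  have "(\<Sum>a\<in>A. 1 - g a) = card A * (1 - m)"
    using assms(5) by (simp add: sum_subtractf algebra_simps)
  then have "card A * ((1 - m) / (1 - c) * ln c) = (\<Sum>a\<in>A. (1 - g a) / (1 - c) * ln c)"
    by (simp add: sum_distrib_right [symmetric] sum_divide_distrib [symmetric])
  also have "\<dots> \<le> (\<Sum>a\<in>A. ln (g a))"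
    using assms(3,4) by (intro sum_mono ln_ge_chord) auto
  finally have "(1 - m) / (1 - c) * ln c \<le> (\<Sum>a\<in>A. ln (g a)) / card A"
    using assms(1,2) by (simp add: le_divide_eq card_gt_0_iff mult.commute)
  then show ?thesis
    using assms(3) by (simp add: powr_def)
qed

lemma powr_ge_tangent:
  fixes c l m :: real
  assumes "0 < c"
  shows "c powr l * (1 + (m - l) * ln c) \<le> c powr m"
proof -
  have "c powr l * (1 + (m - l) * ln c) \<le> c powr l * exp ((m - l) * ln c)"
    using assms by (intro mult_left_mono) auto
  also have "\<dots> = c powr m"
    using assms by (simp add: powr_def exp_add [symmetric] algebra_simps)
  finally show ?thesis .
qed

text \<open>\<open>\<lambda>\<^sub>0\<close> solves \<open>c powr \<lambda>\<^sub>0 = (2 - 2 F) / (- ln c)\<close>, which makes the left-hand side the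
  tangent of \<open>\<lambda> \<mapsto> c powr \<lambda>\<close> at \<open>\<lambda>\<^sub>0\<close>, evaluated at \<open>1/2\<close>.\<close>

lemma lam0_tangent_le_powr_half:
  fixes F lam0 :: real
  assumes "1 / 2 < F" and "F < 1"
    and "lam0 = (ln (2 - 2 * F) - ln (- ln (2 * F - 1))) / ln (2 * F - 1)"
  shows "F - 1 + 2 * lam0 * (1 - F) + (2 * F - 1) powr lam0 \<le> (2 * F - 1) powr (1 / 2)"
proof -
  define c where "c = 2 * F - 1"
  have "0 < c" and "ln c < 0"
    using assms(1,2) by (simp_all add: c_def)
  have "lam0 * ln c = ln (2 - 2 * F) - ln (- ln c)"
    using assms(3) \<open>ln c < 0\<close> by (simp add: c_def)
  then have c_powr_lam0: "c powr lam0 = (2 - 2 * F) / - ln c"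
    using \<open>0 < c\<close> \<open>ln c < 0\<close> assms(2) by (simp add: powr_def exp_diff mult.commute)
  have "F - 1 + 2 * lam0 * (1 - F) + c powr lam0 = c powr lam0 * (1 + (1 / 2 - lam0) * ln c)"
    using \<open>ln c < 0\<close> by (simp add: c_powr_lam0 field_simps)
  also have "\<dots> \<le> c powr (1 / 2)"
    using \<open>0 < c\<close> by (rule powr_ge_tangent)
  finally show ?thesis by (simp add: c_def)
qed

theorem theorem1:
  fixes n :: nat and p :: "nat set \<times> nat set \<Rightarrow> real"
    and d Fp gam lam0 :: real and f :: "nat set \<times> nat set \<Rightarrow> real"
  assumes "n \<ge> 1"
    and "cptp_pauli_channel n p"
    and "d = 2 ^ n"
    and "f = pauli_fidelity n p"
    and "Fp = (\<Sum>a\<in>paulis n. f a) / d\<^sup>2"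
    and "1/2 < Fp" and "Fp < 1"
    and "gam = (\<Prod>a\<in>paulis n. f a) powr (- 2 / d\<^sup>2)"
    and "lam0 = (ln (2 - 2 * Fp) - ln (- ln (2 * Fp - 1))) / ln (2 * Fp - 1)"
  shows "Fp - 1 + 2 * lam0 * (1 - Fp) + (2 * Fp - 1) powr lam0 \<le> gam powr (- 1 / 2)
         \<and> gam powr (- 1 / 2) \<le> Fp"
proof -
  let ?P = "paulis n"
  have card_P: "d\<^sup>2 = card ?P"
    using assms(3) by (simp add: card_paulis power2_eq_square power_mult_distrib [symmetric])
  have sum_f: "(\<Sum>a\<in>?P. f a) = card ?P * Fp"
    using assms(5) card_P by simp
  have Fp_eq: "Fp = p ({}, {})"
    using sum_f by (simp add: assms(4) sum_pauli_fidelity card_paulis)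
  have f_bounds: "2 * Fp - 1 \<le> f a \<and> f a \<le> 1" for a
    using assms(2) by (simp add: assms(4) Fp_eq pauli_fidelity_ge pauli_fidelity_le_one)
  have f_pos: "0 < f a" for a
    using f_bounds [of a] assms(6) by linarith
  have P_ne: "?P \<noteq> {}"
    using identity_in_paulis by blast
  have "gam powr (- 1 / 2) = (\<Prod>a\<in>?P. f a) powr (1 / card ?P)"
    by (simp add: assms(8) powr_powr card_P)
  also have "\<dots> = exp ((\<Sum>a\<in>?P. ln (f a)) / card ?P)"
    using f_pos by (subst prod_powr_eq_exp_sum_ln) auto
  finally have geo_mean: "gam powr (- 1 / 2) = exp ((\<Sum>a\<in>?P. ln (f a)) / card ?P)" .
  have upper: "gam powr (- 1 / 2) \<le> Fp"
    unfolding geo_mean using exp_mean_ln_le_mean [of ?P f] f_pos P_ne by (simp add: sum_f)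
  have half: "(1 - Fp) / (1 - (2 * Fp - 1)) = 1 / 2"
    using assms(7) by (simp add: field_simps)
  have lower: "(2 * Fp - 1) powr (1 / 2) \<le> gam powr (- 1 / 2)"
    using exp_mean_ln_ge [of ?P "2 * Fp - 1" f Fp] f_bounds sum_f P_ne assms(6)
    unfolding half geo_mean by auto
  show ?thesis
    using lam0_tangent_le_powr_half [OF assms(6,7,9)] lower upper by linarith
qed

end
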